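(* Let $X$ and $Y$ be $\mathbb{N}$-valued random variables with $P\{X=0\}\ne1$, $P\{Y=0\}\neq 1$ and $\mathbb{E}[X^r+Y^r]<+\infty$ for some $r\in(1,2]$, and set $\alpha_r=\mathbb{E}[X]^r+\mathbb{E}[Y]^r-1$. Let $f^{(1)}_t$ and $f^{(2)}_t$ be the solutions of the kinetic equation (defined in the context) with initial probability densities $f_0^{(1)}$ and $f_0^{(2)}$ on $\mathbb{N}$ such that $\sum_v vf_0^{(1)}(v)=\sum_v vf_0^{(2)}(v)=m_0$. Then for every $t>0$ $$d_r(f_t^{(1)},f_t^{(2)})\le d_r(f_0^{(1)},f_0^{(2)})\,e^{\alpha_r t}\quad\text{and}\quad d_r^*(f_t^{(1)},f_t^{(2)})\le d_r^*(f_0^{(1)},f_0^{(2)})\,e^{\alpha_r t}.$$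
   Context: For a probability density $f$ on $\mathbb{N}$, $\hat f(z)=\sum_{v\ge0}z^vf(v)$ ($z\in[0,1]$) is its probability generating function and $\tilde f(\xi)=\sum_{v\ge0}e^{-\xi v}f(v)$ ($\xi>0$) its Laplace transform. Let $\hat p_X(z)=\mathbb{E}[z^X]$, $\hat p_Y(z)=\mathbb{E}[z^Y]$. The kinetic equation is $\partial_t f_t(v)=Q^+(f_t,f_t)(v)-f_t(v)$ on $\mathbb{N}$, where $Q^+(f,g)(v)=P\{\sum_{i=1}^{V_1}Y_i+\sum_{i=1}^{V_2}X_i=v\}$, $V_1\sim f$, $V_2\sim g$, $X_i$ i.i.d. $\sim X$, $Y_i$ i.i.d. $\sim Y$, all independent; equivalently $\partial_t\hat f_t(z)=\hat f_t(\hat p_X(z))\hat f_t(\hat p_Y(z))-\hat f_t(z)$, $z\in[0,1]$, which has a unique global solution for each initial probability density. The metrics are $$d_r(f,g)=\sup_{z\in(0,1)}\frac{|\hat f(z)-\hat g(z)|}{|1-z|^r},\qquad d_r^*(f,g)=\sup_{\xi>0}\frac{|\tilde f(\xi)-\tilde g(\xi)|}{\xi^r}.$$ *)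

theory Defs
  imports "HOL-Probability.Probability"
begin

definition pgf :: "nat pmf \<Rightarrow> real \<Rightarrow> real" where
  "pgf p z = (\<Sum>v. z ^ v * pmf p v)"

definition laplace :: "nat pmf \<Rightarrow> real \<Rightarrow> real" where
  "laplace p \<xi> = (\<Sum>v. exp (- \<xi> * real v) * pmf p v)"

definition d_r :: "real \<Rightarrow> nat pmf \<Rightarrow> nat pmf \<Rightarrow> ereal" where
  "d_r r f g = (SUP z\<in>{0<..<1::real}. ereal (\<bar>pgf f z - pgf g z\<bar> / \<bar>1 - z\<bar> powr r))"

definition d_r_star :: "real \<Rightarrow> nat pmf \<Rightarrow> nat pmf \<Rightarrow> ereal" where
  "d_r_star r f g = (SUP \<xi>\<in>{0<..}. ereal (\<bar>laplace f \<xi> - laplace g \<xi>\<bar> / \<xi> powr r))"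

text \<open>f (a family of probability densities indexed by time t \<ge> 0) solves the kinetic
  equation in generating-function form, with initial datum f 0.\<close>
definition kinetic_solution :: "nat pmf \<Rightarrow> nat pmf \<Rightarrow> (real \<Rightarrow> nat pmf) \<Rightarrow> bool" where
  "kinetic_solution pX pY f \<longleftrightarrow>
     (\<forall>t\<ge>0. \<forall>z\<in>{0..1}.
        ((\<lambda>s. pgf (f s) z) has_real_derivative
           (pgf (f t) (pgf pX z) * pgf (f t) (pgf pY z) - pgf (f t) z)) (at t within {0..}))"

end

theory Submission imports Defs begin

text \<open>
  Let \<open>\<phi>, \<psi>\<close> be the generating functions of \<open>X, Y\<close> and \<open>h\<^sub>t = F\<^sub>t - G\<^sub>t\<close> the difference of the
  generating functions of two solutions. The kinetic equation gives
  \<open>\<partial>\<^sub>t (e\<^sup>t h\<^sub>t(z)) = e\<^sup>t (h\<^sub>t(\<phi> z) F\<^sub>t(\<psi> z) + G\<^sub>t(\<phi> z) h\<^sub>t(\<psi> z))\<close> with \<open>|F\<^sub>t|, |G\<^sub>t| \<le> 1\<close>.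
  Both metrics are weighted suprema of \<open>|h(z)| / \<rho>(z)\<close> over \<open>0 < z < 1\<close>, with
  \<open>\<rho>(z) = (1 - z)\<^sup>r\<close> resp. \<open>\<rho>(z) = (-ln z)\<^sup>r\<close> (substituting \<open>z = e\<^sup>-\<^sup>\<xi>\<close>), and Jensen's inequality
  gives \<open>\<rho>(\<phi> z) \<le> E[X]\<^sup>r \<rho>(z)\<close> and \<open>\<rho>(\<psi> z) \<le> E[Y]\<^sup>r \<rho>(z)\<close>. So if \<open>|h\<^sub>0| \<le> D \<rho>\<close>, the linear
  non-local differential inequality for \<open>e\<^sup>t h\<^sub>t\<close> forces \<open>|e\<^sup>t h\<^sub>t(z)| \<le> D \<rho>(z) e\<^sup>c\<^sup>t\<close> with
  \<open>c = E[X]\<^sup>r + E[Y]\<^sup>r\<close>. This comparison is proved by Picard iteration from the crude bound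
  \<open>|h| \<le> 1\<close>; the \<open>n\<close>-th iterate carries the error \<open>e\<^sup>T (2t)\<^sup>n / n!\<close>.
\<close>

lemma pmf_sums_expectation:
  fixes p :: "nat pmf" and g :: "nat \<Rightarrow> real"
  assumes "integrable (measure_pmf p) g"
  shows "(\<lambda>v. pmf p v * g v) sums measure_pmf.expectation p g"
proof -
  have "integrable (count_space UNIV) (\<lambda>v. pmf p v *\<^sub>R g v)"
    using assms by (simp add: measure_pmf_eq_density integrable_density pmf_nonneg)
  from sums_integral_count_space_nat[OF this] show ?thesis
    by (simp add: measure_pmf_eq_density integral_density pmf_nonneg)
qed

lemma integrable_measure_pmf_power:
  fixes p :: "nat pmf" and z :: real
  assumes "z \<in> {0..1}"
  shows "integrable (measure_pmf p) (\<lambda>v. z ^ v)"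
  using assms by (intro measure_pmf.integrable_const_bound[where B=1]) (auto simp: power_le_one)

lemma pgf_eq_expectation:
  fixes z :: real
  assumes "z \<in> {0..1}"
  shows "pgf p z = measure_pmf.expectation p (\<lambda>v. z ^ v)"
  using pmf_sums_expectation[OF integrable_measure_pmf_power[OF assms, of p]]
  unfolding pgf_def by (simp add: sums_iff mult.commute)

lemma pgf_le_1:
  assumes "z \<in> {0..1}"
  shows "pgf p z \<le> 1"
proof -
  have "measure_pmf.expectation p (\<lambda>v. z ^ v) \<le> measure_pmf.expectation p (\<lambda>v. 1)"
    using assms by (intro integral_mono integrable_measure_pmf_power) (auto simp: power_le_one)
  then show ?thesis using assms by (simp add: pgf_eq_expectation)
qed

lemma pgf_1 [simp]: "pgf p 1 = 1"
  by (simp add: pgf_eq_expectation)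

lemma pgf_pos:
  assumes "z \<in> {0<..1}"
  shows "0 < pgf p z"
proof -
  obtain v0 where v0: "v0 \<in> set_pmf p" using set_pmf_not_empty[of p] by blast
  have summable: "summable (\<lambda>v. pmf p v * z ^ v)"
    using pmf_sums_expectation[OF integrable_measure_pmf_power, of z p] assms
    by (auto simp: sums_iff)
  have "0 < pmf p v0 * z ^ v0" using v0 assms by (simp add: pmf_positive)
  also have "\<dots> \<le> (\<Sum>v. pmf p v * z ^ v)"
    using assms by (intro sum_le_suminf[OF summable, of "{v0}", simplified]) auto
  finally show ?thesis unfolding pgf_def by (simp add: mult.commute)
qed

lemma pgf_in_unit_interval: "z \<in> {0<..1} \<Longrightarrow> pgf p z \<in> {0<..1}"
  using pgf_pos[of z p] pgf_le_1[of z p] by auto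

lemma laplace_eq_pgf: "laplace p \<xi> = pgf p (exp (- \<xi>))"
  unfolding laplace_def pgf_def by (simp add: exp_of_nat_mult[symmetric] mult.commute)

lemma integrable_real_if_integrable_powr:
  fixes p :: "nat pmf"
  assumes "1 \<le> r" "integrable (measure_pmf p) (\<lambda>v. real v powr r)"
  shows "integrable (measure_pmf p) real"
proof (rule Bochner_Integration.integrable_bound[OF assms(2)])
  show "AE v in measure_pmf p. norm (real v) \<le> norm (real v powr r)"
  proof (intro AE_I2)
    fix v :: nat
    show "norm (real v) \<le> norm (real v powr r)"
    proof (cases "v = 0")
      case False
      then have "real v powr 1 \<le> real v powr r" using assms(1) by (intro powr_mono) auto
      then show ?thesis by simp
    qed simp
  qed
qed simp

lemma one_minus_pgf_le:
  assumes "integrable (measure_pmf p) real" "z \<in> {0..1}"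
  shows "1 - pgf p z \<le> measure_pmf.expectation p real * (1 - z)"
proof -
  have "1 - pgf p z = measure_pmf.expectation p (\<lambda>v. 1 - z ^ v)"
    using integrable_measure_pmf_power[OF assms(2), of p] assms(2)
    by (simp add: pgf_eq_expectation)
  also have "\<dots> \<le> measure_pmf.expectation p (\<lambda>v. real v * (1 - z))"
  proof (intro integral_mono)
    show "integrable (measure_pmf p) (\<lambda>v. 1 - z ^ v)"
      using integrable_measure_pmf_power[OF assms(2), of p] by simp
    show "integrable (measure_pmf p) (\<lambda>v. real v * (1 - z))" using assms(1) by simp
    fix v :: nat
    have "1 - z ^ v = (1 - z) * (\<Sum>i<v. z ^ i)"
      by (simp add: one_diff_power_eq)
    also have "\<dots> \<le> (1 - z) * (\<Sum>i<v. 1)"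
      using assms(2) by (intro mult_left_mono sum_mono) (auto simp: power_le_one)
    finally show "1 - z ^ v \<le> real v * (1 - z)" by (simp add: mult.commute)
  qed
  finally show ?thesis by simp
qed

text \<open>Jensen's inequality for the convex function \<open>v \<mapsto> w\<^sup>v\<close>, via its tangent at the mean.\<close>

lemma powr_expectation_le_pgf:
  assumes "integrable (measure_pmf p) real" "w \<in> {0<..1}"
  shows "w powr measure_pmf.expectation p real \<le> pgf p w"
proof -
  define \<mu> where "\<mu> = measure_pmf.expectation p real"
  define L where "L = ln w"
  have power_eq: "w ^ v = exp (real v * L)" for v
    using assms(2) by (simp add: L_def exp_of_nat_mult)
  have "w powr \<mu> = measure_pmf.expectation p (\<lambda>v. exp (\<mu> * L) * (1 + (real v * L - \<mu> * L)))"
    using assms by (simp add: \<mu>_def L_def powr_def algebra_simps)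
  also have "\<dots> \<le> measure_pmf.expectation p (\<lambda>v. w ^ v)"
  proof (intro integral_mono)
    show "integrable (measure_pmf p) (\<lambda>v. exp (\<mu> * L) * (1 + (real v * L - \<mu> * L)))"
      using assms(1) by simp
    show "integrable (measure_pmf p) (\<lambda>v. w ^ v)"
      using integrable_measure_pmf_power assms(2) by auto
    fix v :: nat
    have "exp (\<mu> * L) * (1 + (real v * L - \<mu> * L)) \<le> exp (\<mu> * L) * exp (real v * L - \<mu> * L)"
      by (intro mult_left_mono) auto
    also have "\<dots> = w ^ v" by (simp add: power_eq flip: exp_add)
    finally show "exp (\<mu> * L) * (1 + (real v * L - \<mu> * L)) \<le> w ^ v" .
  qed
  finally show ?thesis using assms(2) by (simp add: pgf_eq_expectation \<mu>_def)
qed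

lemma one_minus_pgf_powr_le:
  assumes "integrable (measure_pmf p) real" "0 \<le> r" "w \<in> {0..1}"
  shows "(1 - pgf p w) powr r \<le> measure_pmf.expectation p real powr r * (1 - w) powr r"
proof -
  have "(1 - pgf p w) powr r \<le> (measure_pmf.expectation p real * (1 - w)) powr r"
    using assms pgf_le_1[OF assms(3), of p] one_minus_pgf_le[OF assms(1,3)]
    by (intro powr_mono2) auto
  also have "\<dots> = measure_pmf.expectation p real powr r * (1 - w) powr r"
    using assms(3) by (auto intro: powr_mult)
  finally show ?thesis .
qed

lemma neg_ln_pgf_powr_le:
  assumes "integrable (measure_pmf p) real" "0 \<le> r" "w \<in> {0<..1}"
  shows "(- ln (pgf p w)) powr r \<le> measure_pmf.expectation p real powr r * (- ln w) powr r"
proof -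
  define \<mu> where "\<mu> = measure_pmf.expectation p real"
  have pgf: "0 < pgf p w" "pgf p w \<le> 1" using pgf_in_unit_interval[OF assms(3)] by auto
  have "ln (w powr \<mu>) \<le> ln (pgf p w)"
    using powr_expectation_le_pgf[OF assms(1,3)] assms(3) by (intro ln_mono) (auto simp: \<mu>_def)
  then have "- ln (pgf p w) \<le> \<mu> * (- ln w)"
    using assms(3) by (simp add: ln_powr)
  then have "(- ln (pgf p w)) powr r \<le> (\<mu> * (- ln w)) powr r"
    using assms(2) pgf by (intro powr_mono2) auto
  also have "\<dots> = \<mu> powr r * (- ln w) powr r"
    by (rule powr_mult)
  finally show ?thesis by (simp add: \<mu>_def)
qed

lemma abs_diff_le_if_deriv_le:
  fixes u u' P P' :: "real \<Rightarrow> real"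
  assumes "0 \<le> T"
    and u: "\<And>s. s \<in> {0..T} \<Longrightarrow> (u has_real_derivative u' s) (at s within {0..})"
    and P: "\<And>s. (P has_real_derivative P' s) (at s)"
    and deriv_le: "\<And>s. s \<in> {0..T} \<Longrightarrow> \<bar>u' s\<bar> \<le> P' s"
  shows "\<bar>u T - u 0\<bar> \<le> P T - P 0"
proof -
  have cont_u: "continuous_on {0..T} u"
    unfolding continuous_on_eq_continuous_within
  proof
    fix s assume s: "s \<in> {0..T}"
    have "continuous (at s within {0..}) u" using u[OF s] by (rule DERIV_continuous)
    then show "continuous (at s within {0..T}) u" by (rule continuous_within_subset) auto
  qed
  have cont_P: "continuous_on {0..T} P"
    using P by (intro continuous_at_imp_continuous_on ballI DERIV_isCont) auto
  have u_at: "(u has_real_derivative u' s) (at s)" if "0 < s" "s < T" for s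
  proof -
    have "(u has_real_derivative u' s) (at s within {0<..})"
      using that by (intro DERIV_subset[OF u]) auto
    then show ?thesis using that by (simp add: at_within_open[of s "{0<..}"])
  qed
  have "P 0 + \<sigma> * u 0 \<le> P T + \<sigma> * u T" if "\<sigma> \<in> {-1, 1}" for \<sigma>
  proof (rule DERIV_nonneg_imp_increasing_open[OF \<open>0 \<le> T\<close>, where f="\<lambda>s. P s + \<sigma> * u s"])
    fix x assume "0 < x" "x < T"
    then show "\<exists>y. ((\<lambda>s. P s + \<sigma> * u s) has_real_derivative y) (at x) \<and> 0 \<le> y"
      using deriv_le[of x] that
      by (intro exI[of _ "P' x + \<sigma> * u' x"]) (auto intro!: derivative_eq_intros P u_at)
  qed (intro continuous_intros cont_u cont_P)
  from this[of 1] this[of "-1"] show ?thesis by simp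
qed

lemma has_real_derivative_power_div_fact:
  "((\<lambda>s. (c * s) ^ Suc n / fact (Suc n)) has_real_derivative c * ((c * s) ^ n / fact n)) (at s)"
proof -
  have "((\<lambda>s. (c * s) ^ Suc n) has_real_derivative real (Suc n) * (c * s) ^ n * c) (at s)"
    using DERIV_power[OF DERIV_cmult_Id[of c s], of "Suc n"] by (simp add: mult_ac)
  from DERIV_cdivide[OF this, of "fact (Suc n)"] show ?thesis
    by (simp add: field_simps del: of_nat_Suc)
qed

locale nonlocal_deriv_bound =
  fixes T B c :: real and W :: "'a set" and \<phi> \<psi> :: "'a \<Rightarrow> 'a"
    and g g' :: "real \<Rightarrow> 'a \<Rightarrow> real" and \<omega> :: "'a \<Rightarrow> real"
  assumes deriv: "\<And>s w. s \<in> {0..T} \<Longrightarrow> w \<in> W \<Longrightarrow>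
      ((\<lambda>s. g s w) has_real_derivative g' s w) (at s within {0..})"
    and deriv_le: "\<And>s w. s \<in> {0..T} \<Longrightarrow> w \<in> W \<Longrightarrow> \<bar>g' s w\<bar> \<le> \<bar>g s (\<phi> w)\<bar> + \<bar>g s (\<psi> w)\<bar>"
    and maps_to: "\<And>w. w \<in> W \<Longrightarrow> \<phi> w \<in> W" "\<And>w. w \<in> W \<Longrightarrow> \<psi> w \<in> W"
    and bounded: "\<And>s w. s \<in> {0..T} \<Longrightarrow> w \<in> W \<Longrightarrow> \<bar>g s w\<bar> \<le> B"
    and initial: "\<And>w. w \<in> W \<Longrightarrow> \<bar>g 0 w\<bar> \<le> \<omega> w"
    and weight_nonneg: "\<And>w. w \<in> W \<Longrightarrow> 0 \<le> \<omega> w"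
    and weight_le: "\<And>w. w \<in> W \<Longrightarrow> \<omega> (\<phi> w) + \<omega> (\<psi> w) \<le> c * \<omega> w"
begin

lemma bound_iterate:
  "s \<in> {0..T} \<Longrightarrow> w \<in> W \<Longrightarrow> \<bar>g s w\<bar> \<le> \<omega> w * exp (c * s) + B * ((2 * s) ^ n / fact n)"
proof (induction n arbitrary: s w)
  case 0
  have "0 \<le> \<omega> w * exp (c * s)" using weight_nonneg[OF 0(2)] by simp
  then show ?case using bounded[OF 0] by simp
next
  case (Suc n)
  define P where "P t = \<omega> w * exp (c * t) + B * ((2 * t) ^ Suc n / fact (Suc n))" for t
  define P' where "P' t = c * \<omega> w * exp (c * t) + B * (2 * ((2 * t) ^ n / fact n))" for t
  have P: "(P has_real_derivative P' t) (at t)" for t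
  proof -
    have "((\<lambda>t. \<omega> w * exp (c * t)) has_real_derivative \<omega> w * (exp (c * t) * c)) (at t)"
      by (auto intro!: derivative_eq_intros)
    from DERIV_add[OF this DERIV_cmult[OF has_real_derivative_power_div_fact[of 2 n t], of B]]
    show ?thesis unfolding P_def P'_def by (simp only: mult_ac)
  qed
  have "\<bar>g' t w\<bar> \<le> P' t" if t: "t \<in> {0..s}" for t
  proof -
    have tT: "t \<in> {0..T}" using t Suc.prems by auto
    have "\<bar>g' t w\<bar> \<le> \<bar>g t (\<phi> w)\<bar> + \<bar>g t (\<psi> w)\<bar>" using deriv_le tT Suc.prems by blast
    also have "\<dots> \<le> (\<omega> (\<phi> w) * exp (c * t) + B * ((2 * t) ^ n / fact n))
                  + (\<omega> (\<psi> w) * exp (c * t) + B * ((2 * t) ^ n / fact n))"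
      using Suc.IH tT maps_to Suc.prems by (intro add_mono) auto
    also have "\<dots> = (\<omega> (\<phi> w) + \<omega> (\<psi> w)) * exp (c * t) + B * (2 * ((2 * t) ^ n / fact n))"
      by (simp add: algebra_simps)
    also have "\<dots> \<le> P' t"
      using weight_le Suc.prems by (simp add: P'_def)
    finally show ?thesis .
  qed
  then have "\<bar>g s w - g 0 w\<bar> \<le> P s - P 0"
    using Suc.prems deriv by (intro abs_diff_le_if_deriv_le[OF _ _ P]) auto
  moreover have "P 0 = \<omega> w" by (simp add: P_def)
  ultimately show ?case using initial[of w] Suc.prems by (simp add: P_def)
qed

lemma bound:
  assumes "s \<in> {0..T}" "w \<in> W"
  shows "\<bar>g s w\<bar> \<le> \<omega> w * exp (c * s)"
proof -
  have "(\<lambda>n. \<omega> w * exp (c * s) + B * ((2 * s) ^ n /\<^sub>R fact n)) \<longlonglongrightarrow> \<omega> w * exp (c * s) + B * 0"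
    by (intro tendsto_intros summable_LIMSEQ_zero[OF summable_exp_generic])
  then have "\<bar>g s w\<bar> \<le> \<omega> w * exp (c * s) + B * 0"
    by (rule LIMSEQ_le_const)
      (use bound_iterate[OF assms] in \<open>auto simp: divide_inverse mult.commute\<close>)
  then show ?thesis by simp
qed

end

lemma abs_mult_add_mult_le:
  fixes x y u v :: real
  assumes "\<bar>u\<bar> \<le> 1" "\<bar>v\<bar> \<le> 1"
  shows "\<bar>x * u + v * y\<bar> \<le> \<bar>x\<bar> + \<bar>y\<bar>"
proof -
  have "\<bar>x * u + v * y\<bar> \<le> \<bar>x\<bar> * \<bar>u\<bar> + \<bar>v\<bar> * \<bar>y\<bar>"
    by (metis abs_mult abs_triangle_ineq)
  also have "\<dots> \<le> \<bar>x\<bar> * 1 + 1 * \<bar>y\<bar>"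
    using assms by (intro add_mono mult_mono) auto
  finally show ?thesis by simp
qed

text \<open>The factor \<open>e\<^sup>s\<close> absorbs the loss term \<open>-f\<^sub>t\<close> of the kinetic equation.\<close>

lemma kinetic_solutions_exp_pgf_diff_deriv:
  assumes "kinetic_solution pX pY f1" "kinetic_solution pX pY f2" "0 \<le> s" "z \<in> {0..1}"
  defines "h \<equiv> \<lambda>s z. pgf (f1 s) z - pgf (f2 s) z"
  shows "((\<lambda>s. exp s * h s z) has_real_derivative
           exp s * (h s (pgf pX z) * pgf (f1 s) (pgf pY z) + pgf (f2 s) (pgf pX z) * h s (pgf pY z)))
         (at s within {0..})"
proof -
  have "((\<lambda>s. pgf (f s) z) has_real_derivative
           pgf (f s) (pgf pX z) * pgf (f s) (pgf pY z) - pgf (f s) z) (at s within {0..})"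
    if "kinetic_solution pX pY f" for f
    using that assms(3,4) unfolding kinetic_solution_def by blast
  from DERIV_mult[OF DERIV_exp[THEN has_field_derivative_at_within]
                     DERIV_diff[OF this[OF assms(1)] this[OF assms(2)]]]
  show ?thesis
    by (simp add: h_def algebra_simps)
qed

lemma kinetic_solutions_pgf_diff_le:
  assumes k1: "kinetic_solution pX pY f1" and k2: "kinetic_solution pX pY f2"
    and weight_nonneg: "\<And>w. w \<in> {0<..1} \<Longrightarrow> 0 \<le> \<omega> w"
    and weight_X: "\<And>w. w \<in> {0<..1} \<Longrightarrow> \<omega> (pgf pX w) \<le> a * \<omega> w"
    and weight_Y: "\<And>w. w \<in> {0<..1} \<Longrightarrow> \<omega> (pgf pY w) \<le> b * \<omega> w"
    and initial: "\<And>w. w \<in> {0<..<1} \<Longrightarrow> \<bar>pgf (f1 0) w - pgf (f2 0) w\<bar> \<le> \<omega> w"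
    and "0 \<le> t" "w \<in> {0<..1}"
  shows "\<bar>pgf (f1 t) w - pgf (f2 t) w\<bar> \<le> \<omega> w * exp ((a + b - 1) * t)"
proof -
  define h where "h s z = pgf (f1 s) z - pgf (f2 s) z" for s z
  have pgf_abs_le_1: "\<bar>pgf p z\<bar> \<le> 1" if "z \<in> {0<..1}" for p z
    using pgf_in_unit_interval[OF that, of p] by auto
  have h_abs_le_1: "\<bar>h s z\<bar> \<le> 1" if "z \<in> {0<..1}" for s z
    using pgf_in_unit_interval[OF that, of "f1 s"] pgf_in_unit_interval[OF that, of "f2 s"]
    unfolding h_def by auto
  interpret nonlocal_deriv_bound t "exp t" "a + b" "{0<..1}" "pgf pX" "pgf pY"
      "\<lambda>s z. exp s * h s z"
      "\<lambda>s z. exp s * (h s (pgf pX z) * pgf (f1 s) (pgf pY z) + pgf (f2 s) (pgf pX z) * h s (pgf pY z))"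
      \<omega>
  proof unfold_locales
    fix s z :: real assume s: "s \<in> {0..t}" and z: "z \<in> {0<..1}"
    then show "((\<lambda>s. exp s * h s z) has_real_derivative
        exp s * (h s (pgf pX z) * pgf (f1 s) (pgf pY z) + pgf (f2 s) (pgf pX z) * h s (pgf pY z)))
        (at s within {0..})"
      using kinetic_solutions_exp_pgf_diff_deriv[OF k1 k2] by (simp add: h_def)
    have "\<bar>h s (pgf pX z) * pgf (f1 s) (pgf pY z) + pgf (f2 s) (pgf pX z) * h s (pgf pY z)\<bar>
        \<le> \<bar>h s (pgf pX z)\<bar> + \<bar>h s (pgf pY z)\<bar>"
      by (intro abs_mult_add_mult_le pgf_abs_le_1 pgf_in_unit_interval z)
    then show "\<bar>exp s * (h s (pgf pX z) * pgf (f1 s) (pgf pY z) + pgf (f2 s) (pgf pX z) * h s (pgf pY z))\<bar>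
        \<le> \<bar>exp s * h s (pgf pX z)\<bar> + \<bar>exp s * h s (pgf pY z)\<bar>"
      by (simp add: abs_mult distrib_left[symmetric])
    have "\<bar>exp s * h s z\<bar> \<le> exp s * 1"
      using h_abs_le_1[OF z] by (simp add: abs_mult)
    also have "\<dots> \<le> exp t" using s by simp
    finally show "\<bar>exp s * h s z\<bar> \<le> exp t" .
  next
    fix z :: real assume z: "z \<in> {0<..1}"
    show "\<bar>exp 0 * h 0 z\<bar> \<le> \<omega> z"
      using initial[of z] weight_nonneg[OF z] z by (cases "z = 1") (auto simp: h_def)
    show "0 \<le> \<omega> z" using weight_nonneg[OF z] .
    show "\<omega> (pgf pX z) + \<omega> (pgf pY z) \<le> (a + b) * \<omega> z"
      using weight_X[OF z] weight_Y[OF z] by (simp add: distrib_right)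
  qed (use pgf_in_unit_interval in auto)
  have "exp t * \<bar>h t w\<bar> \<le> \<omega> w * exp ((a + b) * t)"
    using bound[of t w] assms(7,8) by (simp add: abs_mult)
  then show ?thesis
    by (simp add: h_def algebra_simps exp_diff pos_le_divide_eq)
qed

lemma d_r_nonneg: "0 \<le> d_r r f g"
  unfolding d_r_def by (rule SUP_upper2[of "1/2"]) auto

lemma d_r_le_ereal_iff:
  "d_r r f g \<le> ereal D \<longleftrightarrow> (\<forall>z\<in>{0<..<1}. \<bar>pgf f z - pgf g z\<bar> \<le> D * (1 - z) powr r)"
  unfolding d_r_def SUP_le_iff ereal_less_eq
  by (intro ball_cong refl) (simp add: pos_divide_le_eq mult.commute)

lemma d_r_star_eq_SUP_pgf:
  "d_r_star r f g = (SUP w\<in>{0<..<1}. ereal (\<bar>pgf f w - pgf g w\<bar> / (- ln w) powr r))"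
proof -
  have image: "{0<..} = (\<lambda>w. - ln w) ` {0<..<1::real}"
  proof (intro equalityI subsetI)
    fix \<xi> :: real assume "\<xi> \<in> {0<..}"
    then show "\<xi> \<in> (\<lambda>w. - ln w) ` {0<..<1}"
      by (intro image_eqI[of _ _ "exp (- \<xi>)"]) auto
  qed auto
  show ?thesis
    unfolding d_r_star_def image image_image laplace_eq_pgf by (rule SUP_cong) auto
qed

lemma d_r_star_nonneg: "0 \<le> d_r_star r f g"
  unfolding d_r_star_eq_SUP_pgf by (rule SUP_upper2[of "1/2"]) auto

lemma d_r_star_le_ereal_iff:
  "d_r_star r f g \<le> ereal D \<longleftrightarrow> (\<forall>w\<in>{0<..<1}. \<bar>pgf f w - pgf g w\<bar> \<le> D * (- ln w) powr r)"
  unfolding d_r_star_eq_SUP_pgf SUP_le_iff ereal_less_eq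
  by (intro ball_cong refl) (simp add: pos_divide_le_eq mult.commute)

lemma ereal_le_times_if_real_bounds:
  fixes x y :: ereal and K :: real
  assumes "0 \<le> x" "0 < K" "\<And>D. x \<le> ereal D \<Longrightarrow> y \<le> ereal (D * K)"
  shows "y \<le> x * ereal K"
proof (cases x)
  case (real D)
  then show ?thesis using assms(3)[of D] by simp
qed (use assms(1,2) in auto)

lemma kinetic_solutions_weighted_metric_le:
  fixes d :: "nat pmf \<Rightarrow> nat pmf \<Rightarrow> ereal" and \<rho> :: "real \<Rightarrow> real"
  assumes k1: "kinetic_solution pX pY f1" and k2: "kinetic_solution pX pY f2" and "0 \<le> t"
    and d_le_iff: "\<And>f g D. d f g \<le> ereal D \<longleftrightarrow>
                     (\<forall>w\<in>{0<..<1}. \<bar>pgf f w - pgf g w\<bar> \<le> D * \<rho> w)"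
    and d_nonneg: "\<And>f g. 0 \<le> d f g"
    and weight_nonneg: "\<And>w. w \<in> {0<..1} \<Longrightarrow> 0 \<le> \<rho> w"
    and weight_X: "\<And>w. w \<in> {0<..1} \<Longrightarrow> \<rho> (pgf pX w) \<le> a * \<rho> w"
    and weight_Y: "\<And>w. w \<in> {0<..1} \<Longrightarrow> \<rho> (pgf pY w) \<le> b * \<rho> w"
  shows "d (f1 t) (f2 t) \<le> d (f1 0) (f2 0) * ereal (exp ((a + b - 1) * t))"
proof (rule ereal_le_times_if_real_bounds[OF d_nonneg exp_gt_zero])
  fix D assume D: "d (f1 0) (f2 0) \<le> ereal D"
  then have "0 \<le> D" using order_trans[OF d_nonneg D] by simp
  have scaled_weight: "D * \<rho> (pgf p w) \<le> c * (D * \<rho> w)"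
    if "\<And>w. w \<in> {0<..1} \<Longrightarrow> \<rho> (pgf p w) \<le> c * \<rho> w" "w \<in> {0<..1}" for p c w
    using mult_left_mono[OF that(1)[OF that(2)] \<open>0 \<le> D\<close>] by (simp add: mult_ac)
  show "d (f1 t) (f2 t) \<le> ereal (D * exp ((a + b - 1) * t))"
  proof (rule d_le_iff[THEN iffD2], intro ballI)
    fix w :: real assume w: "w \<in> {0<..<1}"
    have "\<bar>pgf (f1 t) w - pgf (f2 t) w\<bar> \<le> D * \<rho> w * exp ((a + b - 1) * t)"
    proof (rule kinetic_solutions_pgf_diff_le[OF k1 k2, where \<omega>="\<lambda>w. D * \<rho> w"])
      show "\<And>w. w \<in> {0<..<1} \<Longrightarrow> \<bar>pgf (f1 0) w - pgf (f2 0) w\<bar> \<le> D * \<rho> w"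
        using D[unfolded d_le_iff] by blast
      show "\<And>w. w \<in> {0<..1} \<Longrightarrow> 0 \<le> D * \<rho> w"
        using \<open>0 \<le> D\<close> weight_nonneg by simp
    qed (use w \<open>0 \<le> t\<close> scaled_weight[OF weight_X] scaled_weight[OF weight_Y] in auto)
    then show "\<bar>pgf (f1 t) w - pgf (f2 t) w\<bar> \<le> D * exp ((a + b - 1) * t) * \<rho> w"
      by (simp add: mult_ac)
  qed
qed

theorem theorem3p2:
  fixes pX pY :: "nat pmf" and r m0 :: real
    and f1 f2 :: "real \<Rightarrow> nat pmf"
  assumes "pmf pX 0 \<noteq> 1" and "pmf pY 0 \<noteq> 1"
    and "r \<in> {1<..2}"
    and "integrable (measure_pmf pX) (\<lambda>v. real v powr r)"
    and "integrable (measure_pmf pY) (\<lambda>v. real v powr r)"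
    and "kinetic_solution pX pY f1" and "kinetic_solution pX pY f2"
    and "integrable (measure_pmf (f1 0)) real" and "measure_pmf.expectation (f1 0) real = m0"
    and "integrable (measure_pmf (f2 0)) real" and "measure_pmf.expectation (f2 0) real = m0"
    and "t > 0"
  shows "d_r r (f1 t) (f2 t) \<le> d_r r (f1 0) (f2 0) *
           ereal (exp ((measure_pmf.expectation pX real powr r
                        + measure_pmf.expectation pY real powr r - 1) * t))
     \<and> d_r_star r (f1 t) (f2 t) \<le> d_r_star r (f1 0) (f2 0) *
           ereal (exp ((measure_pmf.expectation pX real powr r
                        + measure_pmf.expectation pY real powr r - 1) * t))"
proof -
  have r: "1 \<le> r" "0 \<le> r" using assms(3) by auto
  have means: "integrable (measure_pmf pX) real" "integrable (measure_pmf pY) real"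
    using integrable_real_if_integrable_powr[OF r(1)] assms(4,5) by blast+
  have "d_r r (f1 t) (f2 t) \<le> d_r r (f1 0) (f2 0) *
           ereal (exp ((measure_pmf.expectation pX real powr r
                        + measure_pmf.expectation pY real powr r - 1) * t))"
    by (rule kinetic_solutions_weighted_metric_le[where \<rho>="\<lambda>w. (1 - w) powr r",
          OF assms(6,7) _ d_r_le_ereal_iff d_r_nonneg])
      (use assms(12) in \<open>auto intro: one_minus_pgf_powr_le means r(2)\<close>)
  moreover have "d_r_star r (f1 t) (f2 t) \<le> d_r_star r (f1 0) (f2 0) *
           ereal (exp ((measure_pmf.expectation pX real powr r
                        + measure_pmf.expectation pY real powr r - 1) * t))"
    by (rule kinetic_solutions_weighted_metric_le[where \<rho>="\<lambda>w. (- ln w) powr r",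
          OF assms(6,7) _ d_r_star_le_ereal_iff d_r_star_nonneg])
      (use assms(12) in \<open>auto intro: neg_ln_pgf_powr_le means r(2)\<close>)
  ultimately show ?thesis ..
qed

end
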